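(* There is a constant $k>0$ such that for infinitely many primes $q$, every first-order sentence $\varphi$ of the ring language $L(+,\times,0,1)$ describing $\mathbb F_q$ satisfies $\log q\le k\,|\varphi|\log|\varphi|$.
   Context: A sentence $\phi$ describes a structure $M$ if $M$ is, up to isomorphism, the unique model of $\phi$. The length $|\phi|$ of a formula is its number of symbols, each variable counting as a single symbol. Here $\log m=\min\{r\in\mathbb N: 2^r\ge m\}$. *)

theory Defs
  imports Complex_Main "HOL-Computational_Algebra.Primes"
begin

datatype rterm = Var nat | Zero | One | Add rterm rterm | Mul rterm rterm

datatype rform = Eq rterm rterm | FTrue | FFalse | Neg rform | Conj rform rform
  | Disj rform rform | Imp rform rform | Iff rform rform
  | Ex nat rform | All nat rform

text \<open>Length = number of symbols (Polish notation, each variable one symbol).\<close>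
fun tlen :: "rterm \<Rightarrow> nat" where
  "tlen (Var _) = 1" | "tlen Zero = 1" | "tlen One = 1"
| "tlen (Add s t) = tlen s + tlen t + 1" | "tlen (Mul s t) = tlen s + tlen t + 1"

fun flen :: "rform \<Rightarrow> nat" where
  "flen (Eq s t) = tlen s + tlen t + 1" | "flen FTrue = 1" | "flen FFalse = 1"
| "flen (Neg f) = flen f + 1"
| "flen (Conj f g) = flen f + flen g + 1" | "flen (Disj f g) = flen f + flen g + 1"
| "flen (Imp f g) = flen f + flen g + 1" | "flen (Iff f g) = flen f + flen g + 1"
| "flen (Ex x f) = flen f + 2" | "flen (All x f) = flen f + 2"

fun tvars :: "rterm \<Rightarrow> nat set" where
  "tvars (Var x) = {x}" | "tvars Zero = {}" | "tvars One = {}"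
| "tvars (Add s t) = tvars s \<union> tvars t" | "tvars (Mul s t) = tvars s \<union> tvars t"

fun fvars :: "rform \<Rightarrow> nat set" where
  "fvars (Eq s t) = tvars s \<union> tvars t" | "fvars FTrue = {}" | "fvars FFalse = {}"
| "fvars (Neg f) = fvars f"
| "fvars (Conj f g) = fvars f \<union> fvars g" | "fvars (Disj f g) = fvars f \<union> fvars g"
| "fvars (Imp f g) = fvars f \<union> fvars g" | "fvars (Iff f g) = fvars f \<union> fvars g"
| "fvars (Ex x f) = fvars f - {x}" | "fvars (All x f) = fvars f - {x}"

definition sentence :: "rform \<Rightarrow> bool" where
  "sentence f \<longleftrightarrow> fvars f = {}"

text \<open>L-structures with carrier a set of naturals (countable structures):
  (carrier, plus, times, zero, one).\<close>
type_synonym lstruct = "nat set \<times> (nat \<Rightarrow> nat \<Rightarrow> nat) \<times> (nat \<Rightarrow> nat \<Rightarrow> nat) \<times> nat \<times> nat"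

definition lstructure :: "lstruct \<Rightarrow> bool" where
  "lstructure M = (case M of (A, p, m, z, u) \<Rightarrow>
     A \<noteq> {} \<and> z \<in> A \<and> u \<in> A \<and> (\<forall>x\<in>A. \<forall>y\<in>A. p x y \<in> A \<and> m x y \<in> A))"

fun teval :: "lstruct \<Rightarrow> (nat \<Rightarrow> nat) \<Rightarrow> rterm \<Rightarrow> nat" where
  "teval M e (Var x) = e x"
| "teval (A, p, m, z, u) e Zero = z"
| "teval (A, p, m, z, u) e One = u"
| "teval (A, p, m, z, u) e (Add s t) = p (teval (A, p, m, z, u) e s) (teval (A, p, m, z, u) e t)"
| "teval (A, p, m, z, u) e (Mul s t) = m (teval (A, p, m, z, u) e s) (teval (A, p, m, z, u) e t)"

fun holds :: "lstruct \<Rightarrow> (nat \<Rightarrow> nat) \<Rightarrow> rform \<Rightarrow> bool" where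
  "holds M e (Eq s t) = (teval M e s = teval M e t)"
| "holds M e FTrue = True" | "holds M e FFalse = False"
| "holds M e (Neg f) = (\<not> holds M e f)"
| "holds M e (Conj f g) = (holds M e f \<and> holds M e g)"
| "holds M e (Disj f g) = (holds M e f \<or> holds M e g)"
| "holds M e (Imp f g) = (holds M e f \<longrightarrow> holds M e g)"
| "holds M e (Iff f g) = (holds M e f \<longleftrightarrow> holds M e g)"
| "holds M e (Ex x f) = (\<exists>a\<in>fst M. holds M (e(x := a)) f)"
| "holds M e (All x f) = (\<forall>a\<in>fst M. holds M (e(x := a)) f)"

definition models :: "lstruct \<Rightarrow> rform \<Rightarrow> bool" where
  "models M f \<longleftrightarrow> (\<forall>e. (\<forall>i. e i \<in> fst M) \<longrightarrow> holds M e f)"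

definition iso :: "lstruct \<Rightarrow> lstruct \<Rightarrow> bool" where
  "iso M N = (case M of (A, p, m, z, u) \<Rightarrow> case N of (B, p', m', z', u') \<Rightarrow>
     \<exists>h. bij_betw h A B \<and> h z = z' \<and> h u = u' \<and>
         (\<forall>x\<in>A. \<forall>y\<in>A. h (p x y) = p' (h x) (h y) \<and> h (m x y) = m' (h x) (h y)))"

definition describes :: "rform \<Rightarrow> lstruct \<Rightarrow> bool" where
  "describes f M \<longleftrightarrow> models M f \<and> (\<forall>N. lstructure N \<and> models N f \<longrightarrow> iso N M)"

definition Fq :: "nat \<Rightarrow> lstruct" where
  "Fq q = ({0..<q}, \<lambda>x y. (x + y) mod q, \<lambda>x y. (x * y) mod q, 0, 1 mod q)"

definition clog :: "nat \<Rightarrow> nat" where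
  "clog m = (LEAST r. 2 ^ r \<ge> m)"

end

theory Submission
  imports Defs "HOL-Library.Infinite_Set"
begin

(*
  Proof idea (a counting argument against a Chebyshev-type lower bound).
  A sentence describes at most one field F_q, because the fields F_q are pairwise
  non-isomorphic.  After renaming its variables, a sentence of length n uses only the
  variables 0,...,n-1, so it is determined by a word of length n over an alphabet of
  n+20 letters; hence at most (n+20)^(n+1) fields F_q have a describing sentence of
  length at most n.  If all but finitely many primes q had a describing sentence with
  48 |phi| log |phi| < log q, then all primes up to 2^(4m) apart from a fixed finite set
  would be described by sentences whose count is at most 2^m + 441.  This contradicts
  the Chebyshev bound pi(2^R) >= 2^R / R - 1, which we derive from Legendre's formula
  and the estimates 4^n <= 2n binom(2n,n) <= (2n)^(pi(2n)+1).
*)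

definition prime_count :: "nat \<Rightarrow> nat" where
  "prime_count x = card {p. prime p \<and> p \<le> x}"

lemma multiplicity_less_self:
  assumes "prime (p::nat)" "n > 0" shows "multiplicity p n < n"
proof -
  have "p ^ multiplicity p n \<le> n" using assms(2) by (intro dvd_imp_le multiplicity_dvd)
  moreover have "multiplicity p n < p ^ multiplicity p n"
    using assms(1) prime_gt_1_nat by (simp add: power_gt_expt)
  ultimately show ?thesis by simp
qed

lemma prime_power_dvd_iff:
  assumes "prime (p::nat)" "n \<noteq> 0" shows "p ^ i dvd n \<longleftrightarrow> i \<le> multiplicity p n"
  using assms multiplicity_geI[OF assms(2)] multiplicity_dvd' by (metis not_prime_unit)

text \<open>Legendre's formula: the multiplicity of \<open>p\<close> in \<open>m!\<close> is \<open>\<Sum>\<^sub>i \<lfloor>m / p^i\<rfloor>\<close>; the sum may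
  run to any bound \<open>M \<ge> m\<close>, as all later terms vanish.\<close>
lemma multiplicity_fact:
  fixes p :: nat assumes p: "prime p"
  shows "m \<le> M \<Longrightarrow> multiplicity p (fact m :: nat) = (\<Sum>i\<in>{1..M}. m div p ^ i)"
proof (induction m)
  case 0 then show ?case by simp
next
  case (Suc m)
  have "multiplicity p (fact (Suc m) :: nat) = multiplicity p (Suc m) + multiplicity p (fact m :: nat)"
    unfolding fact_Suc of_nat_id using p by (intro prime_elem_multiplicity_mult_distrib) auto
  also have "multiplicity p (Suc m) = (\<Sum>i\<in>{1..M}. if p ^ i dvd Suc m then 1 else 0)"
  proof -
    have "{i\<in>{1..M}. p ^ i dvd Suc m} = {1..multiplicity p (Suc m)}"
      using multiplicity_less_self[OF p, of "Suc m"] Suc.prems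
      by (auto simp: prime_power_dvd_iff[OF p])
    then show ?thesis
      using sum.inter_filter[of "{1..M}" "\<lambda>_. 1::nat" "\<lambda>i. p ^ i dvd Suc m"] by simp
  qed
  also have "multiplicity p (fact m :: nat) = (\<Sum>i\<in>{1..M}. m div p ^ i)"
    using Suc by simp
  also have "(\<Sum>i\<in>{1..M}. if p ^ i dvd Suc m then 1 else 0) + (\<Sum>i\<in>{1..M}. m div p ^ i)
      = (\<Sum>i\<in>{1..M}. Suc m div p ^ i)"
    unfolding sum.distrib[symmetric] using prime_gt_1_nat[OF p]
    by (intro sum.cong) (auto simp: div_Suc mod_eq_0_iff_dvd)
  finally show ?case .
qed

lemma double_div_le:
  assumes "(0::nat) < d" shows "(2*n) div d \<le> 2*(n div d) + (if d \<le> 2*n then 1 else 0)"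
proof (cases "d \<le> 2*n")
  case True
  have "2*n = (2*(n div d))*d + 2*(n mod d)"
    by (metis add_mult_distrib2 div_mult_mod_eq mult.assoc)
  then have "(2*n) div d = 2*(n div d) + (2*(n mod d)) div d"
    using assms by (metis div_mult_self3 less_nat_zero_code linorder_neqE_nat)
  moreover have "(2*(n mod d)) div d \<le> 1"
    using assms less_mult_imp_div_less[of "2*(n mod d)" 2 d] by simp
  ultimately show ?thesis using True by simp
qed simp

lemma power_card_exponents_le:
  assumes "(1::nat) < p" "1 \<le> X" shows "p ^ card {i\<in>{1..K}. p ^ i \<le> X} \<le> X"
proof (cases "{i\<in>{1..K}. p ^ i \<le> X} = {}")
  case True
  then show ?thesis using assms by (simp only: card.empty) simp
next
  case False
  let ?A = "{i\<in>{1..K}. p ^ i \<le> X}"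
  have jA: "Max ?A \<in> ?A" using Max_in[OF _ False] by simp
  have "?A \<subseteq> {1..Max ?A}" by (auto intro: Max_ge)
  then have "card ?A \<le> Max ?A" using card_mono[of "{1..Max ?A}" ?A] by simp
  then have "p ^ card ?A \<le> p ^ Max ?A" using assms(1) by (simp add: power_increasing)
  also have "\<dots> \<le> X" using jA by simp
  finally show ?thesis .
qed

lemma prime_power_central_binomial_le:
  fixes p :: nat assumes p: "prime p" and n: "n > 0"
  shows "p ^ multiplicity p (2*n choose n) \<le> 2*n"
proof -
  have p1: "p > 1" using p prime_gt_1_nat by blast
  let ?C = "2*n choose n" and ?S = "\<lambda>x. \<Sum>i\<in>{1..2*n}. x div p ^ i"
  have "(fact (2*n)::nat) = ?C * (fact n * fact n)"
    using binomial_fact_lemma[of n "2*n"] by (simp add: mult_ac)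
  then have "multiplicity p (fact (2*n)::nat)
      = multiplicity p ?C + (multiplicity p (fact n :: nat) + multiplicity p (fact n :: nat))"
    using p by (simp add: prime_elem_multiplicity_mult_distrib)
  then have legendre: "?S (2*n) = multiplicity p ?C + 2 * ?S n"
    using multiplicity_fact[OF p, of n "2*n"] multiplicity_fact[OF p, of "2*n" "2*n"]
    by simp
  have "?S (2*n) \<le> (\<Sum>i\<in>{1..2*n}. 2*(n div p ^ i) + (if p ^ i \<le> 2*n then 1 else 0))"
    using p1 by (intro sum_mono double_div_le) simp
  also have "\<dots> = 2 * ?S n + card {i\<in>{1..2*n}. p ^ i \<le> 2*n}"
    using sum.inter_filter[of "{1..2*n}" "\<lambda>_. 1::nat" "\<lambda>i. p ^ i \<le> 2*n"]
    by (simp add: sum.distrib sum_distrib_left)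
  finally have "multiplicity p ?C \<le> card {i\<in>{1..2*n}. p ^ i \<le> 2*n}"
    using legendre by simp
  then have "p ^ multiplicity p ?C \<le> p ^ card {i\<in>{1..2*n}. p ^ i \<le> 2*n}"
    using p1 by (simp add: power_increasing)
  also have "\<dots> \<le> 2*n" using p1 n by (intro power_card_exponents_le) auto
  finally show ?thesis .
qed

lemma central_binomial_le_prime_count:
  assumes n: "n > 0" shows "(2*n choose n) \<le> (2*n) ^ prime_count (2*n)"
proof -
  let ?C = "2*n choose n"
  have primes_le: "prime_factors ?C \<subseteq> {p. prime p \<and> p \<le> 2*n}"
  proof
    fix p assume pin: "p \<in> prime_factors ?C"
    then have pp: "prime p" and "1 \<le> multiplicity p ?C"
      using prime_power_dvd_iff[of p ?C 1] by auto
    then have "p ^ 1 \<le> p ^ multiplicity p ?C" using prime_ge_1_nat by (intro power_increasing) auto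
    also have "\<dots> \<le> 2*n" by (rule prime_power_central_binomial_le[OF pp n])
    finally show "p \<in> {p. prime p \<and> p \<le> 2*n}" using pp by simp
  qed
  have "?C = (\<Prod>p \<in> prime_factors ?C. p ^ multiplicity p ?C)"
    by (rule prime_factorization_nat) simp
  also have "\<dots> \<le> (\<Prod>p \<in> prime_factors ?C. 2*n)"
    by (rule prod_mono) (auto intro: prime_power_central_binomial_le[OF _ n])
  also have "\<dots> = (2*n) ^ card (prime_factors ?C)" by simp
  also have "\<dots> \<le> (2*n) ^ prime_count (2*n)"
    unfolding prime_count_def using n primes_le by (intro power_increasing card_mono) auto
  finally show ?thesis .
qed

lemma chebyshev_lower_bound:
  assumes "R \<ge> 1" shows "2 ^ R \<le> R * (prime_count (2 ^ R) + 1)"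
proof -
  define n where "n = (2::nat) ^ (R - 1)"
  have n0: "n > 0" by (simp add: n_def)
  have nR: "2*n = 2^R" using assms by (simp add: n_def power_Suc[symmetric])
  have "4 ^ n / (2 * real n) \<le> real (2*n choose n)" by (rule central_binomial_lower_bound[OF n0])
  then have "real (4 ^ n) \<le> real ((2*n choose n) * (2*n))"
    using n0 by (simp add: field_simps)
  then have "4 ^ n \<le> (2*n choose n) * (2*n)"
    by (simp only: of_nat_le_iff)
  then have "(2::nat) ^ (2 ^ R) \<le> (2*n choose n) * (2*n)"
    by (simp add: nR[symmetric] power_mult)
  also have "\<dots> \<le> (2*n) ^ prime_count (2*n) * (2*n)"
    using central_binomial_le_prime_count[OF n0] by simp
  also have "\<dots> = 2 ^ (R * (prime_count (2^R) + 1))"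
    by (simp only: nR power_Suc2 Suc_eq_plus1[symmetric] power_mult)
  finally show ?thesis by (simp add: power_le_imp_le_exp)
qed

fun tren :: "(nat \<Rightarrow> nat) \<Rightarrow> rterm \<Rightarrow> rterm" where
  "tren r (Var x) = Var (r x)" | "tren r Zero = Zero" | "tren r One = One"
| "tren r (Add s t) = Add (tren r s) (tren r t)" | "tren r (Mul s t) = Mul (tren r s) (tren r t)"

fun fren :: "(nat \<Rightarrow> nat) \<Rightarrow> rform \<Rightarrow> rform" where
  "fren r (Eq s t) = Eq (tren r s) (tren r t)" | "fren r FTrue = FTrue" | "fren r FFalse = FFalse"
| "fren r (Neg f) = Neg (fren r f)"
| "fren r (Conj f g) = Conj (fren r f) (fren r g)" | "fren r (Disj f g) = Disj (fren r f) (fren r g)"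
| "fren r (Imp f g) = Imp (fren r f) (fren r g)" | "fren r (Iff f g) = Iff (fren r f) (fren r g)"
| "fren r (Ex x f) = Ex (r x) (fren r f)" | "fren r (All x f) = All (r x) (fren r f)"

fun fav :: "rform \<Rightarrow> nat set" where
  "fav (Eq s t) = tvars s \<union> tvars t" | "fav FTrue = {}" | "fav FFalse = {}"
| "fav (Neg f) = fav f"
| "fav (Conj f g) = fav f \<union> fav g" | "fav (Disj f g) = fav f \<union> fav g"
| "fav (Imp f g) = fav f \<union> fav g" | "fav (Iff f g) = fav f \<union> fav g"
| "fav (Ex x f) = insert x (fav f)" | "fav (All x f) = insert x (fav f)"

lemma tlen_tren [simp]: "tlen (tren r t) = tlen t" by (induction t) auto
lemma flen_fren [simp]: "flen (fren r f) = flen f" by (induction f) auto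
lemma tvars_tren [simp]: "tvars (tren r t) = r ` tvars t" by (induction t) auto
lemma fav_fren [simp]: "fav (fren r f) = r ` fav f" by (induction f) auto

lemma teval_tren:
  "\<forall>v\<in>tvars t. e v = e' (r v) \<Longrightarrow> teval M e t = teval M e' (tren r t)"
  by (cases M, induction t) auto

lemma holds_fren:
  "inj_on r (fav f) \<Longrightarrow> \<forall>v\<in>fav f. e v = e' (r v) \<Longrightarrow> holds M e f = holds M e' (fren r f)"
proof (induction f arbitrary: e e')
  case (Eq s t) then show ?case using teval_tren[of s e e' r] teval_tren[of t e e' r] by auto
next
  case (Ex x f)
  have "holds M (e(x := a)) f = holds M (e'(r x := a)) (fren r f)" for a
    using Ex.prems by (intro Ex.IH) (auto intro: inj_on_subset simp: inj_on_def)
  then show ?case by simp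
next
  case (All x f)
  have "holds M (e(x := a)) f = holds M (e'(r x := a)) (fren r f)" for a
    using All.prems by (intro All.IH) (auto intro: inj_on_subset simp: inj_on_def)
  then show ?case by simp
qed (simp add: inj_on_Un ball_Un; metis)+

lemma models_fren:
  assumes inj: "inj_on r (fav f)"
  shows "models M f \<longleftrightarrow> models M (fren r f)"
proof
  assume H: "models M f"
  show "models M (fren r f)" unfolding models_def
  proof (intro allI impI)
    fix e' :: "nat \<Rightarrow> nat" assume "\<forall>i. e' i \<in> fst M"
    then have "holds M (e' \<circ> r) f" using H unfolding models_def by auto
    then show "holds M e' (fren r f)" using holds_fren[OF inj, of "e' \<circ> r" e'] by simp
  qed
next
  assume H: "models M (fren r f)"
  show "models M f" unfolding models_def
  proof (intro allI impI)
    fix e :: "nat \<Rightarrow> nat" assume e: "\<forall>i. e i \<in> fst M"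
    define e' where "e' = (\<lambda>w. if w \<in> r ` fav f then e (inv_into (fav f) r w) else e 0)"
    have "\<forall>i. e' i \<in> fst M" using e by (simp add: e'_def)
    then have "holds M e' (fren r f)" using H unfolding models_def by auto
    moreover have "\<forall>v\<in>fav f. e v = e' (r v)" using inj by (simp add: e'_def)
    ultimately show "holds M e f" using holds_fren[OF inj, of e e' M] by simp
  qed
qed

lemma describes_fren: "inj_on r (fav f) \<Longrightarrow> describes f M \<Longrightarrow> describes (fren r f) M"
  unfolding describes_def using models_fren by blast

lemma finite_card_tvars: "finite (tvars t) \<and> card (tvars t) \<le> tlen t"
  by (induction t) (auto intro: le_trans[OF card_Un_le])

lemma finite_card_fav: "finite (fav f) \<and> card (fav f) \<le> flen f"
proof (induction f)
  case (Eq s t) then show ?case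
    using card_Un_le[of "tvars s" "tvars t"] finite_card_tvars[of s] finite_card_tvars[of t] by auto
qed (auto simp: card_insert_if intro: le_trans[OF card_Un_le])

definition normal_formulas :: "nat \<Rightarrow> rform set" where
  "normal_formulas N = {f. flen f \<le> N \<and> fav f \<subseteq> {0..<N}}"

lemma describes_normal_formula:
  assumes "describes f M"
  shows "\<exists>g. describes g M \<and> g \<in> normal_formulas (flen f)"
proof -
  obtain r where r: "bij_betw r (fav f) {0..<card (fav f)}"
    using ex_bij_betw_finite_nat finite_card_fav by blast
  then have "describes (fren r f) M" using describes_fren[OF _ assms] by (simp add: bij_betw_def)
  moreover have "fren r f \<in> normal_formulas (flen f)"
    using r finite_card_fav[of f] by (auto simp: normal_formulas_def bij_betw_def)
  ultimately show ?thesis by blast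
qed

fun tenc :: "rterm \<Rightarrow> nat list" where
  "tenc (Var x) = [x + 20]" | "tenc Zero = [1]" | "tenc One = [2]"
| "tenc (Add s t) = 3 # tenc s @ tenc t" | "tenc (Mul s t) = 4 # tenc s @ tenc t"

fun fenc :: "rform \<Rightarrow> nat list" where
  "fenc (Eq s t) = 5 # tenc s @ tenc t" | "fenc FTrue = [6]" | "fenc FFalse = [7]"
| "fenc (Neg f) = 8 # fenc f"
| "fenc (Conj f g) = 9 # fenc f @ fenc g" | "fenc (Disj f g) = 10 # fenc f @ fenc g"
| "fenc (Imp f g) = 11 # fenc f @ fenc g" | "fenc (Iff f g) = 12 # fenc f @ fenc g"
| "fenc (Ex x f) = 13 # (x + 20) # fenc f" | "fenc (All x f) = 14 # (x + 20) # fenc f"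

text \<open>Unique readability: the codes form a prefix-free set, hence the encoding is injective.\<close>
lemma tenc_prefix_free: "tenc s @ xs = tenc t @ ys \<Longrightarrow> s = t \<and> xs = ys"
proof (induction s arbitrary: t xs ys)
  case (Add s1 s2) show ?case using Add.prems by (cases t; simp) (metis Add.IH)
next
  case (Mul s1 s2) show ?case using Mul.prems by (cases t; simp) (metis Mul.IH)
qed (case_tac t; simp)+

lemma fenc_prefix_free: "fenc f @ xs = fenc g @ ys \<Longrightarrow> f = g \<and> xs = ys"
proof (induction f arbitrary: g xs ys)
  case (Eq s t) show ?case using Eq.prems by (cases g; simp) (metis tenc_prefix_free)
next
  case (Neg f) show ?case using Neg.prems by (cases g; simp) (metis Neg.IH)
next
  case (Conj f1 f2) show ?case using Conj.prems by (cases g; simp) (metis Conj.IH)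
next
  case (Disj f1 f2) show ?case using Disj.prems by (cases g; simp) (metis Disj.IH)
next
  case (Imp f1 f2) show ?case using Imp.prems by (cases g; simp) (metis Imp.IH)
next
  case (Iff f1 f2) show ?case using Iff.prems by (cases g; simp) (metis Iff.IH)
next
  case (Ex x f) show ?case using Ex.prems by (cases g; simp) (metis Ex.IH)
next
  case (All x f) show ?case using All.prems by (cases g; simp) (metis All.IH)
qed (case_tac g; simp)+

lemma length_fenc: "length (fenc f) = flen f"
proof -
  have "length (tenc t) = tlen t" for t by (induction t) auto
  then show ?thesis by (induction f) auto
qed

lemma set_fenc: "fav f \<subseteq> {0..<N} \<Longrightarrow> set (fenc f) \<subseteq> {0..<N+20}"
proof -
  have "tvars t \<subseteq> {0..<N} \<Longrightarrow> set (tenc t) \<subseteq> {0..<N+20}" for t by (induction t) auto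
  then show "fav f \<subseteq> {0..<N} \<Longrightarrow> set (fenc f) \<subseteq> {0..<N+20}" by (induction f) auto
qed

lemma card_normal_formulas: "finite (normal_formulas N) \<and> card (normal_formulas N) \<le> (N+20)^(N+1)"
proof -
  let ?W = "{xs. set xs \<subseteq> {0..<N+20} \<and> length xs \<le> N}"
  have inj: "inj_on fenc (normal_formulas N)"
    using fenc_prefix_free[where xs="[]" and ys="[]"] by (auto intro: inj_onI)
  have words: "fenc ` normal_formulas N \<subseteq> ?W"
    using set_fenc length_fenc by (auto simp: normal_formulas_def)
  have finW: "finite ?W" by (rule finite_lists_length_le) simp
  have "card (normal_formulas N) \<le> card ?W"
    using card_image[OF inj] card_mono[OF finW words] by simp
  also have "\<dots> = (\<Sum>i\<le>N. (N+20)^i)" by (subst card_lists_length_le) simp_all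
  also have "\<dots> \<le> (\<Sum>i\<le>N. (N+20)^N)" by (rule sum_mono) (simp add: power_increasing)
  also have "\<dots> = (N+1) * (N+20)^N" by simp
  also have "\<dots> \<le> (N+20) * (N+20)^N" by (rule mult_right_mono) simp_all
  finally show ?thesis
    using finite_subset[OF words finW] finite_image_iff[OF inj] by simp
qed

text \<open>For \<open>q > 0\<close>, \<open>F\<^sub>q\<close> is an \<open>L\<close>-structure, so it competes in the uniqueness clause of
  \<open>describes\<close>.\<close>
lemma Fq_lstructure: "q > 0 \<Longrightarrow> lstructure (Fq q)"
  unfolding lstructure_def Fq_def by auto

text \<open>Isomorphic fields \<open>F\<^sub>a\<close>, \<open>F\<^sub>b\<close> have equinumerous carriers, so \<open>a = b\<close>.\<close>
lemma iso_Fq: "iso (Fq a) (Fq b) \<Longrightarrow> a = b"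
  unfolding iso_def Fq_def using bij_betw_same_card by fastforce

lemma describes_Fq_unique:
  assumes "describes f (Fq a)" "describes f (Fq b)" "b > 0" shows "a = b"
  using assms Fq_lstructure iso_Fq unfolding describes_def by metis

definition described_within :: "nat \<Rightarrow> nat set" where
  "described_within N = {q. q > 0 \<and> (\<exists>f. describes f (Fq q) \<and> flen f \<le> N)}"

text \<open>Choosing a normal description for each such field gives an injection into the
  normal formulas, so at most \<open>(N+20)^(N+1)\<close> fields have a description of length \<open>\<le> N\<close>.\<close>
lemma card_described_within:
  "finite (described_within N) \<and> card (described_within N) \<le> (N+20)^(N+1)"
proof -
  define g where "g q = (SOME f. f \<in> normal_formulas N \<and> describes f (Fq q))" for q
  have g: "g q \<in> normal_formulas N \<and> describes (g q) (Fq q)" if q: "q \<in> described_within N" for q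
  proof -
    obtain f where "describes f (Fq q)" "flen f \<le> N"
      using q by (auto simp: described_within_def)
    then obtain f' where "describes f' (Fq q)" "f' \<in> normal_formulas (flen f)"
      using describes_normal_formula by blast
    then have "f' \<in> normal_formulas N \<and> describes f' (Fq q)"
      using \<open>flen f \<le> N\<close> by (auto simp: normal_formulas_def)
    then show ?thesis unfolding g_def by (rule someI)
  qed
  have inj: "inj_on g (described_within N)"
  proof (rule inj_onI)
    fix a b assume a: "a \<in> described_within N" and b: "b \<in> described_within N"
      and eq: "g a = g b"
    have "b > 0" using b by (simp add: described_within_def)
    then show "a = b" using g[OF a] g[OF b] eq describes_Fq_unique by metis
  qed
  have into: "g ` described_within N \<subseteq> normal_formulas N" using g by blast
  have "card (described_within N) \<le> card (normal_formulas N)"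
    using card_inj_on_le[OF inj into] card_normal_formulas by blast
  then show ?thesis
    using inj_on_finite[OF inj into] card_normal_formulas[of N] by simp
qed

lemma clog_ge: "n \<le> 2 ^ clog n"
  unfolding clog_def by (rule LeastI[of "\<lambda>r. n \<le> 2 ^ r" n]) (simp add: less_imp_le)

lemma clog_le: "n \<le> 2 ^ R \<Longrightarrow> clog n \<le> R"
  unfolding clog_def by (rule Least_le)

lemma clog_pos: "2 \<le> n \<Longrightarrow> 1 \<le> clog n"
  using clog_ge[of n] by (cases "clog n") auto

lemma normal_formula_count_le:
  assumes "2 \<le> N" shows "(N+20)^(N+1) \<le> (2::nat)^(12*N*clog N)"
proof -
  have c: "1 \<le> clog N" using clog_pos[OF assms] .
  have "(1::nat) \<le> 2^clog N" by simp
  then have "N + 20 \<le> 2^clog N + 20 * 2^clog N" using clog_ge[of N] by linarith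
  also have "\<dots> \<le> 2^(clog N + 5)" by (simp add: power_add)
  also have "\<dots> \<le> 2^(6*clog N)" using c by (intro power_increasing) auto
  finally have "(N+20)^(N+1) \<le> (2^(6*clog N))^(N+1)" by (rule power_mono) simp
  also have "\<dots> = 2^(6*clog N*(N+1))" by (simp only: power_mult)
  also have "\<dots> \<le> 2^(12*N*clog N)" using assms by (intro power_increasing) auto
  finally show ?thesis .
qed

lemma length_threshold:
  "\<exists>N. (N+20)^(N+1) \<le> 441 + 2^m \<and> (\<forall>n. 12 * n * clog n < m \<longrightarrow> n \<le> N)"
proof -
  define Ns where "Ns = {n. n \<le> 1 \<or> 12 * n * clog n < m}"
  have "Ns \<subseteq> {..max 1 m}"
  proof
    fix n assume n: "n \<in> Ns"
    show "n \<in> {..max 1 m}"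
    proof (cases "2 \<le> n")
      case True
      then have "n \<le> 12 * n * clog n" using clog_pos[OF True] by simp
      moreover have "12 * n * clog n < m" using n True by (simp add: Ns_def)
      ultimately have "n < m" by linarith
      then show ?thesis by simp
    qed (use n in \<open>simp add: Ns_def\<close>)
  qed
  then have fin: "finite Ns" by (rule finite_subset) simp
  have "1 \<in> Ns" by (simp add: Ns_def)
  then have N: "Max Ns \<in> Ns" using Max_in[OF fin] by blast
  have "(Max Ns + 20)^(Max Ns + 1) \<le> 441 + 2^m"
  proof (cases "2 \<le> Max Ns")
    case True
    then have "(Max Ns + 20)^(Max Ns + 1) \<le> 2^(12 * Max Ns * clog (Max Ns))"
      by (rule normal_formula_count_le)
    also have "\<dots> \<le> 2^m" using N True by (intro power_increasing) (auto simp: Ns_def)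
    finally show ?thesis by simp
  next
    case False
    then have "Max Ns = 0 \<or> Max Ns = 1" by auto
    then show ?thesis by auto
  qed
  moreover have "\<forall>n. 12 * n * clog n < m \<longrightarrow> n \<le> Max Ns"
    using Max_ge[OF fin] by (simp add: Ns_def)
  ultimately show ?thesis by blast
qed

text \<open>If every prime \<open>q > P0\<close> had a description with \<open>48 |\<phi>| log |\<phi>| < log q\<close>, then
  the primes up to \<open>2^(4m)\<close> would be few: those up to \<open>P0\<close> plus the described fields.\<close>
lemma prime_count_le_if_short_descriptions:
  assumes short: "\<And>q. prime q \<Longrightarrow> P0 < q \<Longrightarrow>
      \<exists>f. describes f (Fq q) \<and> 48 * flen f * clog (flen f) < clog q"
  shows "prime_count (2 ^ (4*m)) \<le> P0 + 1 + (441 + 2^m)"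
proof -
  obtain N where N: "(N+20)^(N+1) \<le> 441 + 2^m" "\<And>n. 12 * n * clog n < m \<Longrightarrow> n \<le> N"
    using length_threshold by blast
  have "{p. prime p \<and> p \<le> 2^(4*m)} \<subseteq> {..P0} \<union> described_within N"
  proof
    fix p :: nat assume p: "p \<in> {p. prime p \<and> p \<le> 2^(4*m)}"
    show "p \<in> {..P0} \<union> described_within N"
    proof (cases "p \<le> P0")
      case False
      then obtain f where f: "describes f (Fq p)" "48 * flen f * clog (flen f) < clog p"
        using short[of p] p False by auto
      have "clog p \<le> 4*m" using p clog_le by auto
      then have "flen f \<le> N" using f(2) N(2)[of "flen f"] by simp
      then show ?thesis using p f(1) prime_gt_0_nat by (auto simp: described_within_def)
    qed simp
  qed
  then have "prime_count (2^(4*m)) \<le> card ({..P0} \<union> described_within N)"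
    unfolding prime_count_def using card_described_within by (intro card_mono) auto
  also have "\<dots> \<le> card {..P0} + card (described_within N)" by (rule card_Un_le)
  also have "\<dots> \<le> P0 + 1 + (441 + 2^m)" using card_described_within[of N] N(1) by simp
  finally show ?thesis .
qed

lemma linear_times_exponential_less:
  assumes "2 \<le> m" "C \<le> m" shows "4 * m * (C + 2^m) < 2^(4*m)"
proof -
  have "C < 2^m" using le_less_trans[OF assms(2) less_exp] .
  have "8 * m < (2::nat)^(m+3)" using less_exp[of m] by (simp add: power_add)
  then have eight: "(8 * m) * 2^m < 2^(m+3) * 2^m" by (intro mult_strict_right_mono) simp_all
  have "4 * m * (C + 2^m) < 4 * m * (2 * 2^m)" using \<open>C < 2^m\<close> assms(1) by simp
  also have "\<dots> = (8 * m) * 2^m" by simp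
  also have "\<dots> < 2^(m+3) * 2^m" by (rule eight)
  also have "\<dots> = 2^((m+3)+m)" by (simp only: power_add)
  also have "\<dots> \<le> 2^(4*m)" using assms(1) by (intro power_increasing) auto
  finally show ?thesis .
qed

text \<open>Hence above every bound there is a prime \<open>q\<close> all of whose descriptions satisfy
  \<open>log q \<le> 48 |\<phi>| log |\<phi>|\<close>: otherwise Chebyshev's bound would be violated at \<open>2^(4m)\<close>.\<close>
lemma long_descriptions_unbounded:
  "\<exists>q. prime q \<and> P0 < q \<and> (\<forall>f. describes f (Fq q) \<longrightarrow> clog q \<le> 48 * flen f * clog (flen f))"
proof (rule ccontr)
  assume "\<not> ?thesis"
  then have short: "\<exists>f. describes f (Fq q) \<and> 48 * flen f * clog (flen f) < clog q"
    if "prime q" "P0 < q" for q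
    using that by (auto simp: not_le)
  define m where "m = P0 + 443"
  have "prime_count (2^(4*m)) \<le> P0 + 1 + (441 + 2^m)"
    by (rule prime_count_le_if_short_descriptions[OF short])
  then have few_primes: "prime_count (2^(4*m)) + 1 \<le> m + 2^m" using m_def by linarith
  have "2^(4*m) \<le> 4*m * (prime_count (2^(4*m)) + 1)"
    by (rule chebyshev_lower_bound) (simp add: m_def)
  also have "\<dots> \<le> 4*m * (m + 2^m)" using few_primes by (rule mult_le_mono2)
  also have "\<dots> < 2^(4*m)" by (rule linear_times_exponential_less) (simp_all add: m_def)
  finally show False by simp
qed

theorem proposition4p3:
  shows "\<exists>k::real. k > 0 \<and>
    infinite {q::nat. prime q \<and>
      (\<forall>\<phi>. sentence \<phi> \<and> describes \<phi> (Fq q) \<longrightarrow>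
         real (clog q) \<le> k * real (flen \<phi>) * real (clog (flen \<phi>)))}"
    (is "\<exists>k. _ \<and> infinite (?G k)")
proof (intro exI conjI)
  show "(48::real) > 0" by simp
  show "infinite (?G 48)"
    unfolding infinite_nat_iff_unbounded
  proof
    fix P0
    obtain q where q: "prime q" "P0 < q"
      and long: "\<And>f. describes f (Fq q) \<Longrightarrow> clog q \<le> 48 * flen f * clog (flen f)"
      using long_descriptions_unbounded by blast
    have "real (clog q) \<le> 48 * real (flen f) * real (clog (flen f))" if "describes f (Fq q)" for f
    proof -
      have "real (clog q) \<le> real (48 * flen f * clog (flen f))"
        using long[OF that] by (simp only: of_nat_le_iff)
      then show ?thesis by simp
    qed
    then show "\<exists>q>P0. q \<in> ?G 48" using q by blast
  qed
qed

end
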